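(* Let $S\subseteq\mathbb{R}^d$ be compact with $0\notin S$, let $R$ be positive homogeneous, and let $0<m\le M$ satisfy $m\le R(\eta)\le M$ for all $\eta\in S$. Let $\mathcal U$ be an open neighborhood of $0$ and $\widetilde R\in C^1(\mathcal U;\mathbb{R})$. Let $E\in\mathrm{End}(\mathbb{R}^d)$ with $\{r^E\}$ contracting, $\mu=\mathrm{tr}E$, $F=E/\mu$, and set $g_{n,\eta}(\theta)=\exp\big(-nR(n^{-E}\theta^F\eta)-n\widetilde R(n^{-E}\theta^F\eta)\big)$ for $n\in\mathbb{N}_+$, $\eta\in S$, $\theta>0$ with $n^{-E}\theta^F\eta\in\mathcal U$. If for some $\kappa>0$, $R$ is homogeneous with respect to $E/\kappa$ and $\widetilde R$ is strongly subhomogeneous with respect to $E/\kappa$ of order $1$, then for every $\beta>1$ there is $\delta>0$ such that $\|g_{n,\eta}\|_{L^\infty[\theta_1,\theta_2]}+\|\partial_\theta g_{n,\eta}\|_{L^1[\theta_1,\theta_2]}\le 1+\beta M/m$ for all $n\in\mathbb{N}_+$, $\eta\in S$, and $0<\theta_1\le\theta_2\le(n\delta)^\mu$.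
   Context: For $E\in\mathrm{End}(\mathbb{R}^d)$, $t>0$, $t^E:=\exp(\log(t)E)$; $\{t^E\}$ is contracting if $\lim_{t\to0}\|t^E\|=0$. $P$ homogeneous w.r.t. $E$: $P(t^E\xi)=tP(\xi)$; $\mathrm{Exp}(P)$ = set of such $E$. Positive homogeneous: real, continuous, positive definite ($\ge0$, zero only at $0$), $\mathrm{Exp}(P)\ne\emptyset$, $\{P=1\}$ compact. For $E$ with $\{t^E\}$ contracting, $\widetilde R\in C^l$ near $0$ is strongly subhomogeneous w.r.t. $E$ of order $l$ if for each $\epsilon>0$ and compact $K$ there is $\tau>0$ with $|t^k\partial_t^k\widetilde R(t^E\xi)|\le\epsilon t$ for all $k\le l$, $0<t<\tau$, $\xi\in K$. *)

theory Defs
  imports "HOL-Analysis.Analysis"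
begin

(* t^E := exp(log t E), the exponential series of the endomorphism (log t) E applied to x *)
definition texp :: "real \<Rightarrow> ('a::euclidean_space \<Rightarrow>\<^sub>L 'a) \<Rightarrow> 'a \<Rightarrow> 'a" where
  "texp t E x = (\<Sum>k. ((ln t) ^ k / fact k) *\<^sub>R ((blinfun_apply E ^^ k) x))"

definition tr :: "('a::euclidean_space \<Rightarrow>\<^sub>L 'a) \<Rightarrow> real" where
  "tr E = (\<Sum>b\<in>Basis. inner (blinfun_apply E b) b)"

definition contracting :: "('a::euclidean_space \<Rightarrow>\<^sub>L 'a) \<Rightarrow> bool" where
  "contracting E \<longleftrightarrow> ((\<lambda>t. onorm (texp t E)) \<longlongrightarrow> 0) (at_right 0)"

definition homogeneous :: "('a::euclidean_space \<Rightarrow> real) \<Rightarrow> ('a \<Rightarrow>\<^sub>L 'a) \<Rightarrow> bool" where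
  "homogeneous P E \<longleftrightarrow> (\<forall>t>0. \<forall>\<xi>. P (texp t E \<xi>) = t * P \<xi>)"

definition Exps :: "('a::euclidean_space \<Rightarrow> real) \<Rightarrow> ('a \<Rightarrow>\<^sub>L 'a) set" where
  "Exps P = {E. homogeneous P E}"

definition positive_homogeneous :: "('a::euclidean_space \<Rightarrow> real) \<Rightarrow> bool" where
  "positive_homogeneous P \<longleftrightarrow>
     continuous_on UNIV P \<and> (\<forall>\<xi>. P \<xi> \<ge> 0) \<and> (\<forall>\<xi>. P \<xi> = 0 \<longleftrightarrow> \<xi> = 0) \<and>
     Exps P \<noteq> {} \<and> compact {\<xi>. P \<xi> = 1}"

definition C1_on :: "'a::euclidean_space set \<Rightarrow> ('a \<Rightarrow> real) \<Rightarrow> bool" where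
  "C1_on U f \<longleftrightarrow> (\<exists>f'::'a \<Rightarrow> ('a \<Rightarrow>\<^sub>L real).
      (\<forall>x\<in>U. (f has_derivative blinfun_apply (f' x)) (at x)) \<and> continuous_on U f')"

definition strongly_subhomogeneous_1 :: "('a::euclidean_space \<Rightarrow>\<^sub>L 'a) \<Rightarrow> ('a \<Rightarrow> real) \<Rightarrow> bool" where
  "strongly_subhomogeneous_1 E Rt \<longleftrightarrow>
     contracting E \<and> (\<exists>V. open V \<and> 0 \<in> V \<and> C1_on V Rt) \<and>
     (\<forall>\<epsilon>>0. \<forall>K. compact K \<longrightarrow> (\<exists>\<tau>>0. \<forall>t. 0 < t \<and> t < \<tau> \<longrightarrow> (\<forall>\<xi>\<in>K.
        \<bar>Rt (texp t E \<xi>)\<bar> \<le> \<epsilon> * t \<and>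
        \<bar>t * deriv (\<lambda>s. Rt (texp s E \<xi>)) t\<bar> \<le> \<epsilon> * t)))"

end

(*
  Write n^-E theta^F eta as the flow exp ((ln theta / mu - ln n) E) eta.  By homogeneity the exponent of
  g becomes psi v = exp (kappa v) R eta + Rt (flow at v), and once v is below some c (equivalently
  theta <= (n exp c)^mu) strong subhomogeneity makes Rt and its derivative along the flow smaller than
  m exp (kappa v) and kappa m exp (kappa v).  So psi >= 0 is nondecreasing, g is decreasing with values
  in (0, 1], and sup |g| + int |g'| <= 1 + (g theta1 - g theta2) <= 2 <= 1 + beta M / m.  The change
  of variables needs mu = tr E > 0: a contracting group has only eigenvalues of positive real part.
*)

theory Submission
  imports Defs Jordan_Normal_Form.Schur_Decomposition
begin

section \<open>Endomorphisms as a Banach algebra\<close>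

text \<open>A copy of \<open>'a \<Rightarrow>\<^sub>L 'a\<close> carrying the Banach algebra structure of composition (the library
  has none), so that the series defining \<open>texp t E\<close> becomes \<open>exp (ln t E)\<close>.\<close>

typedef (overloaded) 'a endo = "UNIV :: ('a::euclidean_space \<Rightarrow>\<^sub>L 'a) set"
  morphisms erep Endo by simp

setup_lifting type_definition_endo

instantiation endo :: (euclidean_space) real_vector
begin
lift_definition zero_endo :: "'a endo" is 0 .
lift_definition plus_endo :: "'a endo \<Rightarrow> 'a endo \<Rightarrow> 'a endo" is "(+)" .
lift_definition minus_endo :: "'a endo \<Rightarrow> 'a endo \<Rightarrow> 'a endo" is "(-)" .
lift_definition uminus_endo :: "'a endo \<Rightarrow> 'a endo" is uminus .
lift_definition scaleR_endo :: "real \<Rightarrow> 'a endo \<Rightarrow> 'a endo" is scaleR .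
instance by standard (transfer; simp add: algebra_simps scaleR_add_right scaleR_add_left)+
end

instantiation endo :: (euclidean_space) real_normed_vector
begin
lift_definition norm_endo :: "'a endo \<Rightarrow> real" is norm .
definition dist_endo :: "'a endo \<Rightarrow> 'a endo \<Rightarrow> real" where "dist_endo x y = norm (x - y)"
definition sgn_endo :: "'a endo \<Rightarrow> 'a endo" where "sgn_endo x = x /\<^sub>R norm x"
definition uniformity_endo :: "('a endo \<times> 'a endo) filter" where
  "uniformity_endo = (INF e\<in>{0 <..}. principal {(x, y). dist x y < e})"
definition open_endo :: "'a endo set \<Rightarrow> bool" where
  "open_endo U \<longleftrightarrow> (\<forall>x\<in>U. eventually (\<lambda>(x', y). x' = x \<longrightarrow> y \<in> U) uniformity)"
instance
  apply standard
  apply (simp_all add: dist_endo_def sgn_endo_def uniformity_endo_def open_endo_def)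
  apply (transfer, simp add: norm_triangle_ineq)+
  done
end

instantiation endo :: (euclidean_space) real_normed_algebra_1
begin
lift_definition one_endo :: "'a endo" is id_blinfun .
lift_definition times_endo :: "'a endo \<Rightarrow> 'a endo \<Rightarrow> 'a endo" is blinfun_compose .
instance
proof
  fix a b c :: "'a endo" and r :: real
  show "a * b * c = a * (b * c)" by transfer (rule blinfun_eqI, simp)
  show "(a + b) * c = a * c + b * c" by transfer (rule blinfun_eqI, simp add: blinfun.bilinear_simps)
  show "a * (b + c) = a * b + a * c" by transfer (rule blinfun_eqI, simp add: blinfun.bilinear_simps)
  show "1 * a = a" by transfer (rule blinfun_eqI, simp)
  show "a * 1 = a" by transfer (rule blinfun_eqI, simp)
  show "r *\<^sub>R a * b = r *\<^sub>R (a * b)" by transfer (rule blinfun_eqI, simp add: blinfun.bilinear_simps)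
  show "a * r *\<^sub>R b = r *\<^sub>R (a * b)" by transfer (rule blinfun_eqI, simp add: blinfun.bilinear_simps)
  show "norm (a * b) \<le> norm a * norm b" by transfer (rule norm_blinfun_compose)
  show "norm (1::'a endo) = 1" by transfer simp
  show "(0::'a endo) \<noteq> 1"
  proof transfer
    obtain b :: 'a where "b \<in> Basis" using nonempty_Basis by blast
    then have "b \<noteq> 0" by auto
    then show "0 \<noteq> (id_blinfun :: 'a \<Rightarrow>\<^sub>L 'a)"
      by (metis blinfun.zero_left blinfun_apply_id_blinfun)
  qed
qed
end

lemma dist_endo_erep: "dist x y = dist (erep x) (erep y)"
  unfolding dist_endo_def dist_norm by transfer simp

instance endo :: (euclidean_space) banach
proof
  fix X :: "nat \<Rightarrow> 'a endo"
  assume "Cauchy X"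
  then have "Cauchy (\<lambda>n. erep (X n))" unfolding Cauchy_def dist_endo_erep .
  then obtain L where "(\<lambda>n. erep (X n)) \<longlonglongrightarrow> L" using Cauchy_convergent_iff convergent_def by blast
  then have "X \<longlonglongrightarrow> Endo L"
    unfolding lim_sequentially dist_endo_erep by (simp add: Endo_inverse)
  then show "convergent X" unfolding convergent_def by blast
qed

lemma erep_mult: "erep (a * b) = erep a o\<^sub>L erep b" by transfer simp
lemma erep_one: "erep 1 = id_blinfun" by transfer simp
lemma erep_scaleR: "erep (r *\<^sub>R a) = r *\<^sub>R erep a" by transfer simp
lemma Endo_scaleR: "Endo (r *\<^sub>R E) = r *\<^sub>R Endo E"
  by (metis Endo_inverse UNIV_I erep_inverse erep_scaleR)

lemma erep_power_apply: "erep (a ^ k) x = (blinfun_apply (erep a) ^^ k) x"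
  by (induction k arbitrary: x) (simp_all add: erep_mult erep_one)

lemma bounded_linear_erep_apply: "bounded_linear (\<lambda>A::'a::euclidean_space endo. erep A x)"
proof -
  have "bounded_linear (erep :: 'a endo \<Rightarrow> _)"
    by (rule bounded_linear_intro[where K=1]) (transfer, simp)+
  then show ?thesis
    using bounded_linear_compose[OF blinfun.bounded_linear_left] by blast
qed

lemma texp_eq_exp: "texp t E x = erep (exp (ln t *\<^sub>R Endo E)) x"
proof -
  have "(\<lambda>n. erep ((ln t *\<^sub>R Endo E) ^ n /\<^sub>R fact n) x) sums erep (exp (ln t *\<^sub>R Endo E)) x"
    by (rule bounded_linear.sums[OF bounded_linear_erep_apply exp_converges])
  moreover have "erep ((ln t *\<^sub>R Endo E) ^ n /\<^sub>R fact n) x = (ln t ^ n / fact n) *\<^sub>R (blinfun_apply E ^^ n) x" for n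
  proof -
    have "(ln t *\<^sub>R Endo E) ^ n /\<^sub>R fact n = (ln t ^ n / fact n) *\<^sub>R Endo E ^ n"
      by (simp add: scaleR_power divide_inverse_commute)
    then show ?thesis
      by (simp add: erep_scaleR erep_power_apply blinfun.scaleR_left Endo_inverse field_simps)
  qed
  ultimately show ?thesis unfolding texp_def by (simp add: sums_iff)
qed

lemma bounded_linear_texp: "bounded_linear (texp t E)"
  by (simp add: texp_eq_exp[abs_def] blinfun.bounded_linear_right)

definition exp_flow :: "('a::euclidean_space \<Rightarrow>\<^sub>L 'a) \<Rightarrow> real \<Rightarrow> 'a \<Rightarrow> 'a" where
  "exp_flow E a x = erep (exp (a *\<^sub>R Endo E)) x"

lemma texp_scaleR: "texp t (c *\<^sub>R E) x = exp_flow E (c * ln t) x"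
  unfolding texp_eq_exp exp_flow_def by (simp add: Endo_scaleR mult.commute)

lemma texp_eq_exp_flow: "texp t E x = exp_flow E (ln t) x"
  using texp_scaleR[of t 1 E x] by simp

lemma exp_flow_add: "exp_flow E a (exp_flow E b x) = exp_flow E (a + b) x"
proof -
  have "exp ((a + b) *\<^sub>R Endo E) = exp (a *\<^sub>R Endo E) * exp (b *\<^sub>R Endo E)"
    using exp_add_commuting[of "a *\<^sub>R Endo E" "b *\<^sub>R Endo E"] by (simp add: scaleR_add_left)
  then show ?thesis unfolding exp_flow_def by (simp add: erep_mult)
qed

lemma exp_flow_has_vector_derivative:
  "((\<lambda>a. exp_flow E a x) has_vector_derivative exp_flow E a (E x)) (at a)"
proof -
  have "((\<lambda>a. erep (exp (a *\<^sub>R Endo E)) x) has_vector_derivative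
      erep (exp (a *\<^sub>R Endo E) * Endo E) x) (at a)"
    by (rule bounded_linear.has_vector_derivative[OF bounded_linear_erep_apply
          exp_scaleR_has_vector_derivative_right])
  then show ?thesis unfolding exp_flow_def by (simp add: erep_mult Endo_inverse)
qed


section \<open>Contracting groups have positive trace\<close>

definition mat_trace :: "'b::comm_ring_1 mat \<Rightarrow> 'b" where
  "mat_trace A = (\<Sum>i<dim_row A. A $$ (i, i))"

lemma mat_trace_mult_comm:
  assumes "A \<in> carrier_mat n m" and "B \<in> carrier_mat m n"
  shows "mat_trace (A * B) = mat_trace (B * A)"
proof -
  have "mat_trace (A * B) = (\<Sum>i<n. \<Sum>j<m. A $$ (i, j) * B $$ (j, i))"
    using assms by (simp add: mat_trace_def scalar_prod_def lessThan_atLeast0)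
  also have "\<dots> = (\<Sum>j<m. \<Sum>i<n. B $$ (j, i) * A $$ (i, j))"
    by (subst sum.swap) (simp add: mult.commute)
  also have "\<dots> = mat_trace (B * A)"
    using assms by (simp add: mat_trace_def scalar_prod_def lessThan_atLeast0)
  finally show ?thesis .
qed

lemma mat_trace_similar:
  assumes "similar_mat_wit A B P Q" and "A \<in> carrier_mat n n"
  shows "mat_trace A = mat_trace B"
proof -
  note sim = similar_mat_witD2[OF assms(2,1)]
  have "mat_trace A = mat_trace (P * (B * Q))"
    using sim by (simp add: assoc_mult_mat[of P n n B n Q n])
  also have "\<dots> = mat_trace (B * Q * P)"
    using sim by (intro mat_trace_mult_comm[of _ n n]) auto
  also have "\<dots> = mat_trace B"
    using sim by (simp add: assoc_mult_mat[of B n n Q n P n])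
  finally show ?thesis .
qed

lemma mat_trace_eq_sum_eigenvalues:
  fixes A :: "'b::conjugatable_ordered_field mat"
  assumes A: "A \<in> carrier_mat n n" and cp: "char_poly A = (\<Prod>a\<leftarrow>es. [:- a, 1:])"
  shows "mat_trace A = sum_list es"
proof -
  obtain B P Q where "schur_decomposition A es = (B, P, Q)" by (metis prod_cases3)
  from schur_decomposition[OF A cp this]
  have sim: "similar_mat_wit A B P Q" and es: "diag_mat B = es" by auto
  have "mat_trace A = mat_trace B" using sim A by (rule mat_trace_similar)
  also have "\<dots> = sum_list es"
    unfolding es[symmetric] diag_mat_def mat_trace_def
    by (simp add: interv_sum_list_conv_sum_set_nat lessThan_atLeast0)
  finally show ?thesis .
qed

lemma inner_sum_enum_Basis:
  assumes b: "bij_betw b {0..<DIM('a)} (Basis :: 'a::euclidean_space set)" and i: "i < DIM('a)"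
  shows "inner (\<Sum>j<DIM('a). c j *\<^sub>R b j) (b i) = c i"
proof -
  have "inner (b j) (b i) = (if j = i then 1 else 0)" if j: "j < DIM('a)" for j
  proof -
    have "b j \<in> Basis" "b i \<in> Basis" using b i j by (auto intro: bij_betw_apply)
    moreover have "b j = b i \<longleftrightarrow> j = i"
      using inj_on_eq_iff[OF bij_betw_imp_inj_on[OF b], of j i] i j by simp
    ultimately show ?thesis by (simp add: inner_Basis)
  qed
  then have "(\<Sum>j<DIM('a). c j * inner (b j) (b i)) = (\<Sum>j<DIM('a). if j = i then c j else 0)"
    by (intro sum.cong) auto
  then show ?thesis using i by (simp add: inner_sum_left)
qed

lemma enum_Basis_eqI:
  assumes b: "bij_betw b {0..<DIM('a)} (Basis :: 'a::euclidean_space set)"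
    and coord: "\<And>i. i < DIM('a) \<Longrightarrow> inner u (b i) = inner w (b i)"
  shows "u = w"
proof (rule euclidean_eqI)
  fix v :: 'a assume "v \<in> Basis"
  then obtain i where "i < DIM('a)" "v = b i"
    using bij_betw_imp_surj_on[OF b] by (metis atLeastLessThan_iff imageE)
  then show "inner u v = inner w v" using coord by simp
qed

text \<open>The matrix of \<open>E\<close> in the basis enumerated by \<open>b\<close>, taken over \<open>\<complex>\<close> so that its
  characteristic polynomial splits.\<close>

definition endo_cmat :: "(nat \<Rightarrow> 'a::euclidean_space) \<Rightarrow> ('a \<Rightarrow>\<^sub>L 'a) \<Rightarrow> complex mat" where
  "endo_cmat b E = mat DIM('a) DIM('a) (\<lambda>(i, j). complex_of_real (inner (E (b j)) (b i)))"

lemma endo_cmat_carrier: "endo_cmat b E \<in> carrier_mat DIM('a) DIM('a)"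
  for b :: "nat \<Rightarrow> 'a::euclidean_space"
  by (simp add: endo_cmat_def)

lemma mat_trace_endo_cmat:
  assumes "bij_betw b {0..<DIM('a)} (Basis :: 'a::euclidean_space set)"
  shows "mat_trace (endo_cmat b E) = complex_of_real (tr E)"
proof -
  have "mat_trace (endo_cmat b E) = (\<Sum>i<DIM('a). complex_of_real (inner (E (b i)) (b i)))"
    unfolding mat_trace_def endo_cmat_def by (intro sum.cong) auto
  also have "\<dots> = complex_of_real (\<Sum>u\<in>Basis. inner (E u) u)"
    using sum.reindex_bij_betw[OF assms, of "\<lambda>u. inner (E u) u"]
    by (simp add: lessThan_atLeast0 flip: of_real_sum)
  finally show ?thesis unfolding tr_def .
qed

lemma texp_equivariant:
  fixes E :: "'a::euclidean_space \<Rightarrow>\<^sub>L 'a" and \<phi> :: "complex \<Rightarrow> 'a"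
  assumes \<phi>: "bounded_linear \<phi>" and E\<phi>: "\<And>z. E (\<phi> z) = \<phi> (z * e)"
  shows "texp t E (\<phi> z) = \<phi> (z * exp (of_real (ln t) * e))"
proof -
  have pow: "(blinfun_apply E ^^ k) (\<phi> z) = \<phi> (z * e ^ k)" for k
    by (induction k) (simp_all add: E\<phi> mult_ac)
  have "(\<lambda>k. z * ((of_real (ln t) * e) ^ k /\<^sub>R fact k)) sums (z * exp (of_real (ln t) * e))"
    by (intro sums_mult exp_converges)
  then have "(\<lambda>k. \<phi> (z * ((of_real (ln t) * e) ^ k /\<^sub>R fact k))) sums \<phi> (z * exp (of_real (ln t) * e))"
    by (rule bounded_linear.sums[OF \<phi>])
  moreover have "\<phi> (z * ((of_real (ln t) * e) ^ k /\<^sub>R fact k)) =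
      (ln t ^ k / fact k) *\<^sub>R (blinfun_apply E ^^ k) (\<phi> z)" for k
  proof -
    have "z * ((of_real (ln t) * e) ^ k /\<^sub>R fact k) = (ln t ^ k / fact k) *\<^sub>R (z * e ^ k)"
      by (simp add: scaleR_conv_of_real power_mult_distrib divide_inverse mult_ac)
    then show ?thesis by (simp add: pow linear.scaleR[OF bounded_linear.linear[OF \<phi>]])
  qed
  ultimately have "(\<lambda>k. (ln t ^ k / fact k) *\<^sub>R (blinfun_apply E ^^ k) (\<phi> z)) sums
      \<phi> (z * exp (of_real (ln t) * e))"
    by (simp only:)
  then show ?thesis unfolding texp_def by (simp add: sums_iff)
qed

text \<open>On the image of \<open>\<phi>\<close>, \<open>t\<^sup>E\<close> acts as multiplication by \<open>t\<^sup>e\<close>, of modulus \<open>\<ge> 1\<close> for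
  \<open>t < 1\<close> if Re \<open>e \<le> 0\<close>; this is incompatible with \<open>\<parallel>t\<^sup>E\<parallel> \<rightarrow> 0\<close>.\<close>

lemma contracting_eigenvalue_Re_pos:
  assumes "contracting E" and \<phi>: "bounded_linear \<phi>" and "\<phi> u \<noteq> 0"
    and E\<phi>: "\<And>z. E (\<phi> z) = \<phi> (z * e)"
  shows "0 < Re e"
proof (rule ccontr)
  assume Re_e: "\<not> 0 < Re e"
  let ?C = "onorm \<phi> * cmod u + 1"
  have C: "?C > 0" using onorm_pos_le[OF \<phi>] by (simp add: add_nonneg_pos)
  have "\<forall>\<^sub>F t in at_right 0. onorm (texp t E) < norm (\<phi> u) / ?C \<and> t < 1 \<and> 0 < t"
    using assms(1,3) C unfolding contracting_def
    by (intro eventually_conj order_tendstoD(2) eventually_at_right_less) auto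
  then obtain t where t: "onorm (texp t E) < norm (\<phi> u) / ?C" "t < 1" "0 < t"
    using eventually_happens'[OF trivial_limit_at_right_real] by blast
  define w where "w = exp (of_real (ln t) * e)"
  have "ln t < 0" using t by simp
  then have w: "1 \<le> cmod w"
    using Re_e by (simp add: w_def mult_nonpos_nonpos)
  have flow: "texp t E (\<phi> z) = \<phi> (z * w)" for z
    unfolding w_def by (rule texp_equivariant[OF \<phi> E\<phi>])
  have "cmod (u / w) \<le> cmod u"
    using w by (simp add: norm_divide divide_le_eq mult_le_cancel_left1)
  then have "norm (\<phi> (u / w)) \<le> ?C"
    using onorm[OF \<phi>, of "u / w"] mult_left_mono[OF _ onorm_pos_le[OF \<phi>]] by fastforce
  have "w \<noteq> 0" using w by auto
  then have "norm (\<phi> u) = norm (texp t E (\<phi> (u / w)))"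
    by (simp add: flow)
  also have "\<dots> \<le> onorm (texp t E) * norm (\<phi> (u / w))"
    by (rule onorm[OF bounded_linear_texp])
  also have "\<dots> \<le> onorm (texp t E) * ?C"
    by (intro mult_left_mono onorm_pos_le[OF bounded_linear_texp]) fact
  also have "\<dots> < norm (\<phi> u)"
    using t C by (simp add: pos_less_divide_eq)
  finally show False by simp
qed

text \<open>The real parts of \<open>z v\<close> give an \<open>E\<close>-equivariant real-linear map \<open>\<complex> \<rightarrow> 'a\<close>.\<close>

lemma eigenvector_endo_cmat_Re_sum:
  fixes b :: "nat \<Rightarrow> 'a::euclidean_space" and v :: "complex vec"
  assumes b: "bij_betw b {0..<DIM('a)} Basis"
    and v: "endo_cmat b E *\<^sub>v v = e \<cdot>\<^sub>v v" and dim: "dim_vec v = DIM('a)"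
  shows "E (\<Sum>j<DIM('a). Re (z * v $ j) *\<^sub>R b j) = (\<Sum>j<DIM('a). Re (z * (e * v $ j)) *\<^sub>R b j)"
proof (rule enum_Basis_eqI[OF b])
  fix i assume i: "i < DIM('a)"
  let ?a = "\<lambda>k. inner (E (b k)) (b i)"
  have "(\<Sum>k<DIM('a). complex_of_real (?a k) * v $ k) = e * v $ i"
    using arg_cong[OF v, of "\<lambda>x. x $ i"] i dim
    by (simp add: endo_cmat_def scalar_prod_def lessThan_atLeast0)
  then have "Re (z * (e * v $ i)) = Re (z * (\<Sum>k<DIM('a). complex_of_real (?a k) * v $ k))"
    by simp
  also have "\<dots> = (\<Sum>k<DIM('a). Re (z * (complex_of_real (?a k) * v $ k)))"
    by (simp only: sum_distrib_left Re_sum)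
  also have "\<dots> = (\<Sum>k<DIM('a). Re (z * v $ k) * ?a k)"
    by (intro sum.cong) (simp_all add: algebra_simps)
  also have "\<dots> = inner (E (\<Sum>j<DIM('a). Re (z * v $ j) *\<^sub>R b j)) (b i)"
    by (simp add: blinfun.sum_right blinfun.scaleR_right inner_sum_left)
  finally show "inner (E (\<Sum>j<DIM('a). Re (z * v $ j) *\<^sub>R b j)) (b i) =
      inner (\<Sum>j<DIM('a). Re (z * (e * v $ j)) *\<^sub>R b j) (b i)"
    using inner_sum_enum_Basis[OF b i] by simp
qed

lemma eigenvalue_endo_cmat_Re_pos:
  assumes "contracting E" and b: "bij_betw b {0..<DIM('a)} (Basis :: 'a::euclidean_space set)"
    and ev: "eigenvector (endo_cmat b E) v e"
  shows "0 < Re e"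
proof -
  let ?d = "DIM('a)"
  define \<phi> where "\<phi> z = (\<Sum>j<?d. Re (z * v $ j) *\<^sub>R b j)" for z
  have v: "dim_vec v = ?d" "v \<noteq> 0\<^sub>v ?d" "endo_cmat b E *\<^sub>v v = e \<cdot>\<^sub>v v"
    using ev endo_cmat_carrier[of b E] by (auto simp: eigenvector_def)
  have \<phi>_coord: "inner (\<phi> z) (b i) = Re (z * v $ i)" if "i < ?d" for z i
    unfolding \<phi>_def using b that by (rule inner_sum_enum_Basis)
  have \<phi>_linear: "bounded_linear \<phi>"
    unfolding \<phi>_def
    by (intro bounded_linear_sum bounded_linear_compose[OF bounded_linear_scaleR_left]
        bounded_linear_compose[OF bounded_linear_Re] bounded_linear_mult_left)
  have "\<exists>j<?d. v $ j \<noteq> 0"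
  proof (rule ccontr)
    assume "\<not> ?thesis"
    then have "v = 0\<^sub>v ?d" using v(1) by (intro eq_vecI) auto
    then show False using v(2) by simp
  qed
  then obtain j where j: "j < ?d" "v $ j \<noteq> 0" by blast
  have \<phi>_nonzero: "\<phi> (cnj (v $ j)) \<noteq> 0"
  proof
    assume "\<phi> (cnj (v $ j)) = 0"
    then have "Re (cnj (v $ j) * v $ j) = 0" using \<phi>_coord[OF j(1), of "cnj (v $ j)"] by simp
    moreover have "cnj (v $ j) * v $ j = complex_of_real (cmod (v $ j) ^ 2)"
      using complex_norm_square[of "v $ j"] by (simp add: mult.commute)
    ultimately show False using j(2) by simp
  qed
  have \<phi>_equivariant: "E (\<phi> z) = \<phi> (z * e)" for z
    unfolding \<phi>_def using eigenvector_endo_cmat_Re_sum[OF b v(3,1)] by (simp add: mult.assoc)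
  show ?thesis
    by (rule contracting_eigenvalue_Re_pos[OF assms(1) \<phi>_linear \<phi>_nonzero \<phi>_equivariant])
qed

lemma contracting_imp_tr_pos:
  fixes E :: "'a::euclidean_space \<Rightarrow>\<^sub>L 'a"
  assumes "contracting E"
  shows "0 < tr E"
proof -
  obtain b :: "nat \<Rightarrow> 'a" where b: "bij_betw b {0..<DIM('a)} Basis"
    using ex_bij_betw_nat_finite[of "Basis :: 'a set"] by auto
  obtain es where cp: "char_poly (endo_cmat b E) = (\<Prod>a\<leftarrow>es. [:- a, 1:])"
    and len: "length es = DIM('a)"
    using char_poly_factorized[OF endo_cmat_carrier] by blast
  have "Re e > 0" if "e \<in> set es" for e
  proof -
    have "poly (char_poly (endo_cmat b E)) e = 0"
      using that unfolding cp poly_prod_list by (auto simp: prod_list_zero_iff)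
    then have "eigenvalue (endo_cmat b E) e"
      using eigenvalue_root_char_poly[OF endo_cmat_carrier] by blast
    then obtain v where "eigenvector (endo_cmat b E) v e" unfolding eigenvalue_def by blast
    then show ?thesis by (rule eigenvalue_endo_cmat_Re_pos[OF assms b])
  qed
  moreover have "es \<noteq> []" using len by auto
  ultimately have "0 < (\<Sum>i<length es. Re (es ! i))"
    by (intro sum_pos) (auto simp: nth_mem)
  also have "\<dots> = Re (sum_list es)"
    by (simp add: sum_list_sum_nth Re_sum lessThan_atLeast0)
  also have "\<dots> = tr E"
    using mat_trace_eq_sum_eigenvalues[OF endo_cmat_carrier cp] mat_trace_endo_cmat[OF b, of E]
    by (metis Re_complex_of_real)
  finally show ?thesis .
qed



section \<open>The variation estimate\<close>

lemma texp_exp_eq_exp_flow: "0 < \<kappa> \<Longrightarrow> texp (exp (\<kappa> * v)) ((1 / \<kappa>) *\<^sub>R E) x = exp_flow E v x"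
  by (simp add: texp_scaleR)

lemma texp_path_eq_exp_flow:
  "texp s (- E) (texp \<theta> ((1 / \<mu>) *\<^sub>R E) \<eta>) = exp_flow E (ln \<theta> / \<mu> - ln s) \<eta>"
proof -
  have neg: "texp s (- E) x = exp_flow E (- ln s) x" for x
    using texp_scaleR[of s "- 1" E x] by simp
  have "texp s (- E) (texp \<theta> ((1 / \<mu>) *\<^sub>R E) \<eta>) = exp_flow E (- ln s + ln \<theta> / \<mu>) \<eta>"
    by (simp add: neg texp_scaleR exp_flow_add)
  then show ?thesis by (simp only: uminus_add_conv_diff)
qed

lemma homogeneous_along_exp_flow:
  assumes "homogeneous R ((1 / \<kappa>) *\<^sub>R E)" and "0 < \<kappa>"
  shows "R (exp_flow E v \<eta>) = exp (\<kappa> * v) * R \<eta>"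
  using assms texp_exp_eq_exp_flow[OF assms(2)] unfolding homogeneous_def by (metis exp_gt_zero)

lemma has_real_derivative_along_exp_flow:
  assumes "(f has_derivative blinfun_apply L) (at (exp_flow E v \<eta>))"
  shows "((\<lambda>v. f (exp_flow E v \<eta>)) has_real_derivative L (exp_flow E v (E \<eta>))) (at v)"
proof -
  have "((\<lambda>v. exp_flow E v \<eta>) has_derivative (\<lambda>h. h *\<^sub>R exp_flow E v (E \<eta>))) (at v)"
    using exp_flow_has_vector_derivative unfolding has_vector_derivative_def .
  from diff_chain_at[OF this assms] show ?thesis
    by (simp add: has_field_derivative_def o_def blinfun.scaleR_right mult_commute_abs)
qed

text \<open>Along \<open>s \<mapsto> s\<^sup>E\<^sup>/\<^sup>\<kappa> \<eta> = exp_flow E (ln s / \<kappa>) \<eta>\<close> the derivative picks up the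
  factor \<open>1 / (\<kappa> s)\<close>.\<close>

lemma derivative_along_exp_flow_bound:
  assumes "0 < \<kappa>" and df: "(f has_derivative blinfun_apply L) (at (exp_flow E v \<eta>))"
    and bound: "\<bar>exp (\<kappa> * v) * deriv (\<lambda>s. f (texp s ((1 / \<kappa>) *\<^sub>R E) \<eta>)) (exp (\<kappa> * v))\<bar>
      \<le> \<epsilon> * exp (\<kappa> * v)"
  shows "\<bar>L (exp_flow E v (E \<eta>))\<bar> \<le> \<kappa> * \<epsilon> * exp (\<kappa> * v)"
proof -
  let ?t = "exp (\<kappa> * v)" and ?D = "L (exp_flow E v (E \<eta>))"
  have "((\<lambda>s. ln s / \<kappa>) has_real_derivative 1 / (\<kappa> * ?t)) (at ?t)"
    using \<open>0 < \<kappa>\<close> by (auto intro!: derivative_eq_intros)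
  moreover have "((\<lambda>v. f (exp_flow E v \<eta>)) has_real_derivative ?D) (at (ln ?t / \<kappa>))"
    using \<open>0 < \<kappa>\<close> has_real_derivative_along_exp_flow[OF df] by simp
  ultimately have "((\<lambda>s. f (exp_flow E (ln s / \<kappa>) \<eta>)) has_real_derivative ?D * (1 / (\<kappa> * ?t))) (at ?t)"
    by (rule DERIV_chain2[rotated])
  moreover have "f (exp_flow E (ln s / \<kappa>) \<eta>) = f (texp s ((1 / \<kappa>) *\<^sub>R E) \<eta>)" for s
    by (simp add: texp_scaleR)
  ultimately have "deriv (\<lambda>s. f (texp s ((1 / \<kappa>) *\<^sub>R E) \<eta>)) ?t = ?D / (\<kappa> * ?t)"
    by (simp add: DERIV_imp_deriv)
  then have "\<bar>?D\<bar> / \<kappa> \<le> \<epsilon> * ?t"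
    using bound \<open>0 < \<kappa>\<close> by (simp add: abs_mult abs_divide)
  then show ?thesis using \<open>0 < \<kappa>\<close> by (simp add: divide_le_eq mult_ac)
qed

lemma exponent_along_exp_flow:
  assumes hom: "homogeneous R ((1 / \<kappa>) *\<^sub>R E)" and "0 < \<kappa>" and "\<epsilon> \<le> R \<eta>"
    and dRt: "(Rt has_derivative blinfun_apply L) (at (exp_flow E v \<eta>))"
    and Rt: "\<bar>Rt (exp_flow E v \<eta>)\<bar> \<le> \<epsilon> * exp (\<kappa> * v)"
    and dRt_bound: "\<bar>exp (\<kappa> * v) * deriv (\<lambda>s. Rt (texp s ((1 / \<kappa>) *\<^sub>R E) \<eta>)) (exp (\<kappa> * v))\<bar>
      \<le> \<epsilon> * exp (\<kappa> * v)"
  shows "0 \<le> R (exp_flow E v \<eta>) + Rt (exp_flow E v \<eta>)"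
    and "((\<lambda>v. R (exp_flow E v \<eta>) + Rt (exp_flow E v \<eta>)) has_real_derivative
          \<kappa> * exp (\<kappa> * v) * R \<eta> + L (exp_flow E v (E \<eta>))) (at v)"
    and "0 \<le> \<kappa> * exp (\<kappa> * v) * R \<eta> + L (exp_flow E v (E \<eta>))"
proof -
  note R_flow = homogeneous_along_exp_flow[OF hom \<open>0 < \<kappa>\<close>]
  have "\<epsilon> * exp (\<kappa> * v) \<le> exp (\<kappa> * v) * R \<eta>"
    using mult_right_mono[OF \<open>\<epsilon> \<le> R \<eta>\<close>, of "exp (\<kappa> * v)"] by (simp add: mult.commute)
  then show "0 \<le> R (exp_flow E v \<eta>) + Rt (exp_flow E v \<eta>)"
    using Rt unfolding R_flow abs_le_iff by linarith
  show "((\<lambda>v. R (exp_flow E v \<eta>) + Rt (exp_flow E v \<eta>)) has_real_derivative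
          \<kappa> * exp (\<kappa> * v) * R \<eta> + L (exp_flow E v (E \<eta>))) (at v)"
    unfolding R_flow
    by (intro DERIV_add has_real_derivative_along_exp_flow[OF dRt])
      (auto intro!: derivative_eq_intros)
  have "\<kappa> * \<epsilon> * exp (\<kappa> * v) \<le> \<kappa> * exp (\<kappa> * v) * R \<eta>"
    using \<open>\<epsilon> \<le> R \<eta>\<close> \<open>0 < \<kappa>\<close> by (simp add: mult_ac)
  then show "0 \<le> \<kappa> * exp (\<kappa> * v) * R \<eta> + L (exp_flow E v (E \<eta>))"
    using derivative_along_exp_flow_bound[OF \<open>0 < \<kappa>\<close> dRt dRt_bound] by linarith
qed

lemma integral_abs_deriv_nonincreasing:
  fixes g g' :: "real \<Rightarrow> real"
  assumes "a \<le> b" and dg: "\<And>x. x \<in> {a..b} \<Longrightarrow> (g has_real_derivative g' x) (at x)"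
    and g'_nonpos: "\<And>x. x \<in> {a..b} \<Longrightarrow> g' x \<le> 0"
  shows "deriv g absolutely_integrable_on {a..b}"
    and "integral {a..b} (\<lambda>x. \<bar>deriv g x\<bar>) = g a - g b"
proof -
  have deriv: "deriv g x = g' x" if "x \<in> {a..b}" for x
    using dg[OF that] by (rule DERIV_imp_deriv)
  have "(g' has_integral (g b - g a)) {a..b}"
    using \<open>a \<le> b\<close> dg
    by (intro fundamental_theorem_of_calculus)
      (auto simp: has_real_derivative_iff_has_vector_derivative has_vector_derivative_at_within)
  then have int: "(deriv g has_integral (g b - g a)) {a..b}"
    using has_integral_cong[of "{a..b}" "deriv g" g'] deriv by simp
  have "((\<lambda>x. - g' x) has_integral (g a - g b)) {a..b}"
    using has_integral_neg[OF \<open>(g' has_integral _) _\<close>] by simp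
  then have abs_int: "((\<lambda>x. \<bar>deriv g x\<bar>) has_integral (g a - g b)) {a..b}"
    using has_integral_cong[of "{a..b}" "\<lambda>x. \<bar>deriv g x\<bar>" "\<lambda>x. - g' x"] deriv g'_nonpos
    by simp
  show "deriv g absolutely_integrable_on {a..b}"
    unfolding absolutely_integrable_on_def using int abs_int by (auto simp: real_norm_def)
  show "integral {a..b} (\<lambda>x. \<bar>deriv g x\<bar>) = g a - g b"
    using abs_int by (rule integral_unique)
qed

lemma ln_over_le_iff_le_powr:
  fixes \<mu> s \<theta> c :: real
  assumes "0 < \<mu>" and "0 < s" and "0 < \<theta>"
  shows "ln \<theta> / \<mu> - ln s \<le> c \<longleftrightarrow> \<theta> \<le> (s * exp c) powr \<mu>"
proof -
  have "0 < s * exp c" using assms by simp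
  then have "0 < (s * exp c) powr \<mu>" by (metis powr_gt_zero less_irrefl)
  then have "\<theta> \<le> (s * exp c) powr \<mu> \<longleftrightarrow> ln \<theta> \<le> ln ((s * exp c) powr \<mu>)"
    by (rule ln_le_cancel_iff[OF assms(3), symmetric])
  also have "ln ((s * exp c) powr \<mu>) = \<mu> * (ln s + c)"
    using assms by (simp add: ln_powr ln_mult)
  also have "ln \<theta> \<le> \<mu> * (ln s + c) \<longleftrightarrow> ln \<theta> / \<mu> - ln s \<le> c"
    using assms by (simp add: pos_divide_le_eq algebra_simps)
  finally show ?thesis by simp
qed

text \<open>With \<open>\<psi> \<ge> 0\<close> nondecreasing, \<open>g\<close> decreases from at most \<open>1\<close> to more than \<open>0\<close>, so its
  total variation is at most \<open>1\<close>.\<close>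

lemma variation_exp_neg_monotone_profile:
  fixes \<psi> \<psi>' g :: "real \<Rightarrow> real"
  assumes "0 < \<mu>" and "0 < s"
    and \<psi>: "\<And>v. v \<le> c \<Longrightarrow> 0 \<le> \<psi> v \<and> 0 \<le> \<psi>' v \<and> (\<psi> has_real_derivative \<psi>' v) (at v)"
    and g: "\<And>\<theta>. g \<theta> = exp (- s * \<psi> (ln \<theta> / \<mu> - ln s))"
    and \<theta>: "0 < \<theta>\<^sub>1" "\<theta>\<^sub>1 \<le> \<theta>\<^sub>2" "\<theta>\<^sub>2 \<le> (s * exp c) powr \<mu>"
  shows "deriv g absolutely_integrable_on {\<theta>\<^sub>1..\<theta>\<^sub>2}"
    and "(SUP \<theta>\<in>{\<theta>\<^sub>1..\<theta>\<^sub>2}. \<bar>g \<theta>\<bar>) + integral {\<theta>\<^sub>1..\<theta>\<^sub>2} (\<lambda>\<theta>. \<bar>deriv g \<theta>\<bar>) \<le> 2"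
proof -
  define w where "w \<theta> = ln \<theta> / \<mu> - ln s" for \<theta>
  have w_le: "w \<theta> \<le> c" if "\<theta> \<in> {\<theta>\<^sub>1..\<theta>\<^sub>2}" for \<theta>
    using that \<theta> ln_over_le_iff_le_powr[OF \<open>0 < \<mu>\<close> \<open>0 < s\<close>, of \<theta> c] by (simp add: w_def)
  have g_pos: "0 < g \<theta>" for \<theta> by (simp add: g)
  have g_le_1: "g \<theta> \<le> 1" if "\<theta> \<in> {\<theta>\<^sub>1..\<theta>\<^sub>2}" for \<theta>
    using \<psi>[OF w_le[OF that]] \<open>0 < s\<close> by (simp add: g w_def[symmetric])
  have dg: "(g has_real_derivative g \<theta> * (- s * (\<psi>' (w \<theta>) * (1 / (\<mu> * \<theta>))))) (at \<theta>)"
    if "\<theta> \<in> {\<theta>\<^sub>1..\<theta>\<^sub>2}" for \<theta>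
  proof -
    have "(w has_real_derivative 1 / (\<mu> * \<theta>)) (at \<theta>)"
      unfolding w_def using that \<theta> \<open>0 < \<mu>\<close> by (auto intro!: derivative_eq_intros)
    from DERIV_chain2[OF conjunct2[OF conjunct2[OF \<psi>[OF w_le[OF that]]]] this]
    have "((\<lambda>\<theta>. exp (- s * \<psi> (w \<theta>))) has_real_derivative
        exp (- s * \<psi> (w \<theta>)) * (- s * (\<psi>' (w \<theta>) * (1 / (\<mu> * \<theta>))))) (at \<theta>)"
      by (intro DERIV_fun_exp DERIV_cmult)
    moreover have "g = (\<lambda>\<theta>. exp (- s * \<psi> (w \<theta>)))" by (rule ext) (simp add: g w_def)
    ultimately show ?thesis by simp
  qed
  have dg_nonpos: "g \<theta> * (- s * (\<psi>' (w \<theta>) * (1 / (\<mu> * \<theta>)))) \<le> 0" if "\<theta> \<in> {\<theta>\<^sub>1..\<theta>\<^sub>2}" for \<theta>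
  proof -
    have "0 \<le> g \<theta> * (s * (\<psi>' (w \<theta>) * (1 / (\<mu> * \<theta>))))"
      using \<psi>[OF w_le[OF that]] g_pos[of \<theta>] that \<theta> \<open>0 < s\<close> \<open>0 < \<mu>\<close>
      by (intro mult_nonneg_nonneg) simp_all
    then show ?thesis by (simp only: mult_minus_left mult_minus_right neg_le_0_iff_le)
  qed
  note variation = integral_abs_deriv_nonincreasing[OF \<theta>(2) dg dg_nonpos]
  show "deriv g absolutely_integrable_on {\<theta>\<^sub>1..\<theta>\<^sub>2}" by (rule variation(1))
  have "(SUP \<theta>\<in>{\<theta>\<^sub>1..\<theta>\<^sub>2}. \<bar>g \<theta>\<bar>) \<le> 1"
    using \<theta>(2) g_le_1 g_pos by (intro cSUP_least) (auto simp: abs_of_pos)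
  moreover have "g \<theta>\<^sub>1 - g \<theta>\<^sub>2 \<le> 1"
    using g_le_1[of \<theta>\<^sub>1] g_pos[of \<theta>\<^sub>2] \<theta>(2) by simp
  ultimately show "(SUP \<theta>\<in>{\<theta>\<^sub>1..\<theta>\<^sub>2}. \<bar>g \<theta>\<bar>) + integral {\<theta>\<^sub>1..\<theta>\<^sub>2} (\<lambda>\<theta>. \<bar>deriv g \<theta>\<bar>) \<le> 2"
    using variation(2) by simp
qed

lemma filterlim_exp_mult_at_bot:
  fixes \<kappa> :: real
  assumes "0 < \<kappa>"
  shows "filterlim (\<lambda>w. exp (\<kappa> * w)) (at_right 0) at_bot"
proof -
  have "filterlim exp (at_right (0::real)) at_bot" by (auto simp: filterlim_at exp_at_bot)
  moreover have "filterlim (\<lambda>w. \<kappa> * w) at_bot at_bot"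
    using filterlim_tendsto_pos_mult_at_bot[OF tendsto_const assms filterlim_ident] .
  ultimately show ?thesis by (rule filterlim_compose)
qed

lemma eventually_exp_flow_in_open:
  assumes "contracting E" and "compact S" and "open U" and "0 \<in> U"
  shows "\<forall>\<^sub>F w in at_bot. \<forall>\<eta>\<in>S. exp_flow E w \<eta> \<in> U"
proof -
  obtain r where r: "0 < r" "ball 0 r \<subseteq> U" using assms(3,4) open_contains_ball by blast
  obtain B where B: "0 < B" "\<forall>\<eta>\<in>S. norm \<eta> \<le> B"
    using compact_imp_bounded[OF assms(2)] bounded_pos by blast
  have "\<forall>\<^sub>F t in at_right 0. onorm (texp t E) < r / B"
    using assms(1) r B unfolding contracting_def by (intro order_tendstoD(2)) auto
  from eventually_compose_filterlim[OF this filterlim_exp_mult_at_bot[of 1]]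
  have "\<forall>\<^sub>F w in at_bot. onorm (texp (exp w) E) < r / B" by simp
  then show ?thesis
  proof eventually_elim
    case (elim w)
    show ?case
    proof
      fix \<eta> assume "\<eta> \<in> S"
      have "norm (texp (exp w) E \<eta>) \<le> onorm (texp (exp w) E) * norm \<eta>"
        by (rule onorm[OF bounded_linear_texp])
      also have "\<dots> \<le> onorm (texp (exp w) E) * B"
        using B \<open>\<eta> \<in> S\<close> by (intro mult_left_mono onorm_pos_le[OF bounded_linear_texp]) auto
      also have "\<dots> < r" using elim B by (simp add: pos_less_divide_eq)
      finally show "exp_flow E w \<eta> \<in> U" using r by (auto simp: texp_eq_exp_flow)
    qed
  qed
qed

lemma eventually_strongly_subhomogeneous:
  assumes "strongly_subhomogeneous_1 ((1 / \<kappa>) *\<^sub>R E) Rt" and "0 < \<kappa>" and "0 < \<epsilon>" and "compact S"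
  shows "\<forall>\<^sub>F w in at_bot. \<forall>\<eta>\<in>S. \<bar>Rt (exp_flow E w \<eta>)\<bar> \<le> \<epsilon> * exp (\<kappa> * w) \<and>
    \<bar>exp (\<kappa> * w) * deriv (\<lambda>s. Rt (texp s ((1 / \<kappa>) *\<^sub>R E) \<eta>)) (exp (\<kappa> * w))\<bar> \<le> \<epsilon> * exp (\<kappa> * w)"
proof -
  have "\<forall>\<epsilon>>0. \<forall>K. compact K \<longrightarrow> (\<exists>\<tau>>0. \<forall>t. 0 < t \<and> t < \<tau> \<longrightarrow> (\<forall>\<xi>\<in>K.
      \<bar>Rt (texp t ((1 / \<kappa>) *\<^sub>R E) \<xi>)\<bar> \<le> \<epsilon> * t \<and>
      \<bar>t * deriv (\<lambda>s. Rt (texp s ((1 / \<kappa>) *\<^sub>R E) \<xi>)) t\<bar> \<le> \<epsilon> * t))"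
    using assms(1) unfolding strongly_subhomogeneous_1_def by blast
  then obtain \<tau> where "0 < \<tau>" and \<tau>: "\<forall>t. 0 < t \<and> t < \<tau> \<longrightarrow> (\<forall>\<xi>\<in>S.
      \<bar>Rt (texp t ((1 / \<kappa>) *\<^sub>R E) \<xi>)\<bar> \<le> \<epsilon> * t \<and>
      \<bar>t * deriv (\<lambda>s. Rt (texp s ((1 / \<kappa>) *\<^sub>R E) \<xi>)) t\<bar> \<le> \<epsilon> * t)"
    using assms(3,4) by blast
  then have "\<forall>\<^sub>F t in at_right 0. \<forall>\<xi>\<in>S. \<bar>Rt (texp t ((1 / \<kappa>) *\<^sub>R E) \<xi>)\<bar> \<le> \<epsilon> * t \<and>
      \<bar>t * deriv (\<lambda>s. Rt (texp s ((1 / \<kappa>) *\<^sub>R E) \<xi>)) t\<bar> \<le> \<epsilon> * t"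
    unfolding eventually_at_right_field by (intro exI[of _ \<tau>]) auto
  from eventually_compose_filterlim[OF this filterlim_exp_mult_at_bot[OF assms(2)]]
  show ?thesis by (simp add: texp_exp_eq_exp_flow[OF assms(2)])
qed


lemma sup_plus_variation_along_exp_flow_le_2:
  fixes E :: "'a::euclidean_space \<Rightarrow>\<^sub>L 'a" and R Rt :: "'a \<Rightarrow> real" and g :: "real \<Rightarrow> real"
  assumes hom: "homogeneous R ((1 / \<kappa>) *\<^sub>R E)" and "0 < \<kappa>" and "0 < \<mu>" and "0 < s"
    and "m \<le> R \<eta>" and f': "\<And>x. x \<in> U \<Longrightarrow> (Rt has_derivative blinfun_apply (f' x)) (at x)"
    and near: "\<And>w. w \<le> c \<Longrightarrow> exp_flow E w \<eta> \<in> U \<and> \<bar>Rt (exp_flow E w \<eta>)\<bar> \<le> m * exp (\<kappa> * w) \<and>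
      \<bar>exp (\<kappa> * w) * deriv (\<lambda>s. Rt (texp s ((1 / \<kappa>) *\<^sub>R E) \<eta>)) (exp (\<kappa> * w))\<bar> \<le> m * exp (\<kappa> * w)"
    and g: "\<And>\<theta>. g \<theta> = exp (- s * R (texp s (- E) (texp \<theta> ((1 / \<mu>) *\<^sub>R E) \<eta>))
                            - s * Rt (texp s (- E) (texp \<theta> ((1 / \<mu>) *\<^sub>R E) \<eta>)))"
    and \<theta>: "0 < \<theta>\<^sub>1" "\<theta>\<^sub>1 \<le> \<theta>\<^sub>2" "\<theta>\<^sub>2 \<le> (s * exp c) powr \<mu>"
  shows "\<forall>\<theta>\<in>{\<theta>\<^sub>1..\<theta>\<^sub>2}. texp s (- E) (texp \<theta> ((1 / \<mu>) *\<^sub>R E) \<eta>) \<in> U"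
    and "deriv g absolutely_integrable_on {\<theta>\<^sub>1..\<theta>\<^sub>2}"
    and "(SUP \<theta>\<in>{\<theta>\<^sub>1..\<theta>\<^sub>2}. \<bar>g \<theta>\<bar>) + integral {\<theta>\<^sub>1..\<theta>\<^sub>2} (\<lambda>\<theta>. \<bar>deriv g \<theta>\<bar>) \<le> 2"
proof -
  show "\<forall>\<theta>\<in>{\<theta>\<^sub>1..\<theta>\<^sub>2}. texp s (- E) (texp \<theta> ((1 / \<mu>) *\<^sub>R E) \<eta>) \<in> U"
    using \<theta> near ln_over_le_iff_le_powr[OF \<open>0 < \<mu>\<close> \<open>0 < s\<close>, of _ c]
    by (auto simp: texp_path_eq_exp_flow)
  define \<psi> where "\<psi> v = R (exp_flow E v \<eta>) + Rt (exp_flow E v \<eta>)" for v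
  define \<psi>' where "\<psi>' v = \<kappa> * exp (\<kappa> * v) * R \<eta> + f' (exp_flow E v \<eta>) (exp_flow E v (E \<eta>))" for v
  have \<psi>: "0 \<le> \<psi> v \<and> 0 \<le> \<psi>' v \<and> (\<psi> has_real_derivative \<psi>' v) (at v)" if "v \<le> c" for v
    using exponent_along_exp_flow[OF hom \<open>0 < \<kappa>\<close> \<open>m \<le> R \<eta>\<close> f'] near[OF that]
    unfolding \<psi>_def[abs_def] \<psi>'_def by blast
  have "g \<theta> = exp (- s * \<psi> (ln \<theta> / \<mu> - ln s))" for \<theta>
    unfolding g texp_path_eq_exp_flow \<psi>_def by (simp add: algebra_simps)
  note variation = variation_exp_neg_monotone_profile[OF \<open>0 < \<mu>\<close> \<open>0 < s\<close> \<psi> this \<theta>]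
  show "deriv g absolutely_integrable_on {\<theta>\<^sub>1..\<theta>\<^sub>2}" by (rule variation(1))
  show "(SUP \<theta>\<in>{\<theta>\<^sub>1..\<theta>\<^sub>2}. \<bar>g \<theta>\<bar>) + integral {\<theta>\<^sub>1..\<theta>\<^sub>2} (\<lambda>\<theta>. \<bar>deriv g \<theta>\<bar>) \<le> 2"
    by (rule variation(2))
qed

theorem mainTheorem8:
  fixes S :: "'a::euclidean_space set" and R Rt :: "'a \<Rightarrow> real"
    and m M \<mu> \<kappa> :: real and U :: "'a set" and E F :: "'a \<Rightarrow>\<^sub>L 'a"
    and g :: "nat \<Rightarrow> 'a \<Rightarrow> real \<Rightarrow> real"
  assumes "compact S" and "0 \<notin> S"
    and "positive_homogeneous R"
    and "0 < m" and "m \<le> M" and "\<forall>\<eta>\<in>S. m \<le> R \<eta> \<and> R \<eta> \<le> M"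
    and "open U" and "0 \<in> U" and "C1_on U Rt"
    and "contracting E" and "\<mu> = tr E" and "F = (1 / \<mu>) *\<^sub>R E"
    and "\<And>n \<eta> \<theta>. g n \<eta> \<theta> =
           exp (- real n * R (texp (real n) (- E) (texp \<theta> F \<eta>))
                - real n * Rt (texp (real n) (- E) (texp \<theta> F \<eta>)))"
    and "0 < \<kappa>" and "homogeneous R ((1 / \<kappa>) *\<^sub>R E)"
    and "strongly_subhomogeneous_1 ((1 / \<kappa>) *\<^sub>R E) Rt"
  shows "\<forall>\<beta>>1. \<exists>\<delta>>0. \<forall>n::nat. n \<ge> 1 \<longrightarrow> (\<forall>\<eta>\<in>S. \<forall>\<theta>\<^sub>1 \<theta>\<^sub>2.
           0 < \<theta>\<^sub>1 \<and> \<theta>\<^sub>1 \<le> \<theta>\<^sub>2 \<and> \<theta>\<^sub>2 \<le> (real n * \<delta>) powr \<mu> \<longrightarrow>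
             (\<forall>\<theta>\<in>{\<theta>\<^sub>1..\<theta>\<^sub>2}. texp (real n) (- E) (texp \<theta> F \<eta>) \<in> U) \<and>
             (\<lambda>\<theta>. deriv (g n \<eta>) \<theta>) absolutely_integrable_on {\<theta>\<^sub>1..\<theta>\<^sub>2} \<and>
             (SUP \<theta>\<in>{\<theta>\<^sub>1..\<theta>\<^sub>2}. \<bar>g n \<eta> \<theta>\<bar>)
               + integral {\<theta>\<^sub>1..\<theta>\<^sub>2} (\<lambda>\<theta>. \<bar>deriv (g n \<eta>) \<theta>\<bar>)
               \<le> 1 + \<beta> * M / m)"
proof -
  have "0 < \<mu>" using contracting_imp_tr_pos[OF assms(10)] assms(11) by simp
  obtain f' where f': "\<And>x. x \<in> U \<Longrightarrow> (Rt has_derivative blinfun_apply (f' x)) (at x)"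
    using assms(9) unfolding C1_on_def by blast
  have "\<forall>\<^sub>F w in at_bot. \<forall>\<eta>\<in>S. exp_flow E w \<eta> \<in> U \<and> \<bar>Rt (exp_flow E w \<eta>)\<bar> \<le> m * exp (\<kappa> * w) \<and>
    \<bar>exp (\<kappa> * w) * deriv (\<lambda>s. Rt (texp s ((1 / \<kappa>) *\<^sub>R E) \<eta>)) (exp (\<kappa> * w))\<bar> \<le> m * exp (\<kappa> * w)"
    using eventually_conj[OF eventually_exp_flow_in_open[OF assms(10,1,7,8)]
        eventually_strongly_subhomogeneous[OF assms(16,14,4,1)]]
    by (rule eventually_mono) blast
  then obtain c where near: "\<And>w \<eta>. w \<le> c \<Longrightarrow> \<eta> \<in> S \<Longrightarrow> exp_flow E w \<eta> \<in> U \<and>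
      \<bar>Rt (exp_flow E w \<eta>)\<bar> \<le> m * exp (\<kappa> * w) \<and>
      \<bar>exp (\<kappa> * w) * deriv (\<lambda>s. Rt (texp s ((1 / \<kappa>) *\<^sub>R E) \<eta>)) (exp (\<kappa> * w))\<bar> \<le> m * exp (\<kappa> * w)"
    unfolding eventually_at_bot_linorder by blast
  show ?thesis
  proof (intro allI impI exI[of _ "exp c"] conjI exp_gt_zero ballI)
    fix \<beta> :: real and n :: nat and \<eta> \<theta>\<^sub>1 \<theta>\<^sub>2
    assume "1 < \<beta>" and "1 \<le> n" and "\<eta> \<in> S"
      and \<theta>: "0 < \<theta>\<^sub>1 \<and> \<theta>\<^sub>1 \<le> \<theta>\<^sub>2 \<and> \<theta>\<^sub>2 \<le> (real n * exp c) powr \<mu>"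
    have n_\<eta>: "0 < real n" "m \<le> R \<eta>" using \<open>1 \<le> n\<close> \<open>\<eta> \<in> S\<close> assms(6) by auto
    have \<theta>': "0 < \<theta>\<^sub>1" "\<theta>\<^sub>1 \<le> \<theta>\<^sub>2" "\<theta>\<^sub>2 \<le> (real n * exp c) powr \<mu>" using \<theta> by auto
    note bounds = sup_plus_variation_along_exp_flow_le_2[OF assms(15,14) \<open>0 < \<mu>\<close> n_\<eta> f'
        near[OF _ \<open>\<eta> \<in> S\<close>] assms(13)[unfolded assms(12)] \<theta>']
    show "texp (real n) (- E) (texp \<theta> F \<eta>) \<in> U" if "\<theta> \<in> {\<theta>\<^sub>1..\<theta>\<^sub>2}" for \<theta>
      using bounds(1) that unfolding assms(12) by blast
    show "(\<lambda>\<theta>. deriv (g n \<eta>) \<theta>) absolutely_integrable_on {\<theta>\<^sub>1..\<theta>\<^sub>2}"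
      using bounds(2) by simp
    have "1 * 1 \<le> \<beta> * (M / m)" using \<open>1 < \<beta>\<close> assms(4,5) by (intro mult_mono) auto
    then show "(SUP \<theta>\<in>{\<theta>\<^sub>1..\<theta>\<^sub>2}. \<bar>g n \<eta> \<theta>\<bar>) + integral {\<theta>\<^sub>1..\<theta>\<^sub>2} (\<lambda>\<theta>. \<bar>deriv (g n \<eta>) \<theta>\<bar>)
        \<le> 1 + \<beta> * M / m"
      using bounds(3) by simp
  qed
qed

end
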